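(* $\beta_2\geqslant\sqrt{7}$. More precisely, there exists a set $P$ of $19$ points in the Euclidean plane such that the largest edge-length of a bottleneck spanning tree of $P$ equals $1$, while every Hamiltonian path on $P$ (i.e., every spanning tree of $P$ of maximum degree at most $2$) has an edge of length at least $\sqrt{7}$.
   Context: For a finite point set $P$ in the plane, consider the complete graph on $P$ with edge weights equal to Euclidean distances. A bottleneck spanning tree (BST) of $P$ is a spanning tree minimizing the largest edge-length. For an integer $K\geqslant 2$, a bottleneck degree-$K$ spanning tree is a spanning tree of maximum degree at most $K$ minimizing the largest edge-length. $\beta_K$ denotes the supremum, over all finite point sets in the Euclidean plane, of the ratio of the largest edge-length of a bottleneck degree-$K$ spanning tree to the largest edge-length of a BST. *)

theory Defs
  imports "HOL-Analysis.Analysis"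
begin

type_synonym point = "real ^ 2"

definition edges_on :: "point set \<Rightarrow> point set set \<Rightarrow> bool" where
  "edges_on P T \<longleftrightarrow> T \<subseteq> {{p, q} | p q. p \<in> P \<and> q \<in> P \<and> p \<noteq> q}"

definition adj :: "point set set \<Rightarrow> (point \<times> point) set" where
  "adj T = {(p, q). {p, q} \<in> T}"

definition graph_connected :: "point set \<Rightarrow> point set set \<Rightarrow> bool" where
  "graph_connected P T \<longleftrightarrow> (\<forall>p\<in>P. \<forall>q\<in>P. (p, q) \<in> (adj T)\<^sup>*)"

definition spanning_tree :: "point set \<Rightarrow> point set set \<Rightarrow> bool" where
  "spanning_tree P T \<longleftrightarrow> edges_on P T \<and> graph_connected P T \<and>
     (\<forall>e\<in>T. \<not> graph_connected P (T - {e}))"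

definition deg :: "point set set \<Rightarrow> point \<Rightarrow> nat" where
  "deg T v = card {e \<in> T. v \<in> e}"

definition max_edge :: "point set set \<Rightarrow> real" where
  "max_edge T = Max (insert 0 {dist p q | p q. {p, q} \<in> T})"

definition bst_val :: "point set \<Rightarrow> real" where
  "bst_val P = Min {max_edge T | T. spanning_tree P T}"

definition bdeg_val :: "nat \<Rightarrow> point set \<Rightarrow> real" where
  "bdeg_val K P = Min {max_edge T | T. spanning_tree P T \<and> (\<forall>v\<in>P. deg T v \<le> K)}"

definition beta :: "nat \<Rightarrow> ereal" where
  "beta K = Sup {ereal (bdeg_val K P / bst_val P) | P. finite P \<and> card P \<ge> 2}"

end

theory Submission
  imports Defs "HOL-Library.Transitive_Closure_Table"
begin

text \<open>
  The point set consists of the origin of the triangular lattice and three congruent forks: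
  a stem u1, u2 leading away from the origin, followed by two prongs v1, v2 and w1, w2 that
  branch at u2. Unit edges connect the points, and distinct lattice points are at distance at
  least 1, so the bottleneck spanning tree has largest edge 1. A Hamiltonian path whose edges
  are all shorter than sqrt 7 only joins lattice points at squared distance 1, 3 or 4. This
  leaves the prong vertices so few possible neighbours that, unless one of them is an endpoint
  of the path, the fork is closed under adjacency and hence cut off from the origin. So every
  fork contains an endpoint, and the path would have three endpoints.
\<close>

definition neighbours :: "point set set \<Rightarrow> point \<Rightarrow> point set" where
  "neighbours T p = {q. {p, q} \<in> T}"

lemma edges_onD:
  assumes "edges_on P T" "{p, q} \<in> T"
  shows "p \<noteq> q" "p \<in> P" "q \<in> P"
  using assms unfolding edges_on_def by (auto simp: doubleton_eq_iff)

lemma neighbours_symD: "q \<in> neighbours T p \<Longrightarrow> p \<in> neighbours T q"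
  by (simp add: neighbours_def insert_commute)

lemma neighbours_subset: "edges_on P T \<Longrightarrow> neighbours T p \<subseteq> P"
  unfolding neighbours_def using edges_onD(3) by blast

lemma finite_neighbours: "finite P \<Longrightarrow> edges_on P T \<Longrightarrow> finite (neighbours T p)"
  using finite_subset[OF neighbours_subset] .

lemma self_notin_neighbours: "edges_on P T \<Longrightarrow> p \<notin> neighbours T p"
  unfolding neighbours_def using edges_onD(1) by blast

lemma adj_iff_neighbours: "(p, q) \<in> adj T \<longleftrightarrow> q \<in> neighbours T p"
  by (simp add: adj_def neighbours_def)

lemma deg_eq_card_neighbours:
  assumes "edges_on P T"
  shows "deg T p = card (neighbours T p)"
proof -
  have "{e \<in> T. p \<in> e} = (\<lambda>q. {p, q}) ` neighbours T p"
  proof (intro equalityI subsetI)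
    fix e assume e: "e \<in> {e \<in> T. p \<in> e}"
    then obtain x y where "e = {x, y}" using assms unfolding edges_on_def by blast
    with e have "e = {p, if p = x then y else x}" by auto
    with e show "e \<in> (\<lambda>q. {p, q}) ` neighbours T p" by (auto simp: neighbours_def)
  qed (auto simp: neighbours_def)
  moreover have "inj_on (\<lambda>q. {p, q}) (neighbours T p)"
    using self_notin_neighbours[OF assms] by (auto simp: inj_on_def doubleton_eq_iff)
  ultimately show ?thesis unfolding deg_def by (simp add: card_image)
qed

lemma deg_mono: "finite T' \<Longrightarrow> T \<subseteq> T' \<Longrightarrow> deg T v \<le> deg T' v"
  unfolding deg_def by (rule card_mono) auto

lemma finite_edges: "finite P \<Longrightarrow> edges_on P T \<Longrightarrow> finite T"
  unfolding edges_on_def by (rule finite_subset[of _ "Pow P"]) auto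

lemma sym_adj: "sym (adj T)"
  by (auto simp: sym_def adj_def insert_commute)

lemma graph_connected_from_root:
  assumes "r \<in> P" "\<And>p. p \<in> P \<Longrightarrow> (r, p) \<in> (adj T)\<^sup>*"
  shows "graph_connected P T"
  unfolding graph_connected_def
proof (intro ballI)
  fix p q assume "p \<in> P" "q \<in> P"
  then have "(p, r) \<in> (adj T)\<^sup>*" "(r, q) \<in> (adj T)\<^sup>*"
    using assms sym_rtrancl[OF sym_adj] by (auto dest: symD)
  then show "(p, q) \<in> (adj T)\<^sup>*" by (rule rtrancl_trans)
qed

lemma graph_connected_by_descent:
  fixes f :: "point \<Rightarrow> real"
  assumes fin: "finite P" and r: "r \<in> P"
    and descent: "\<And>p. p \<in> P \<Longrightarrow> p \<noteq> r \<Longrightarrow> \<exists>q\<in>P. {q, p} \<in> T \<and> f q < f p"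
  shows "graph_connected P T"
proof (rule graph_connected_from_root[OF r])
  fix p assume "p \<in> P"
  then show "(r, p) \<in> (adj T)\<^sup>*"
  proof (induction "card {x \<in> P. f x < f p}" arbitrary: p rule: less_induct)
    case less
    show ?case
    proof (cases "p = r")
      case False
      then obtain q where q: "q \<in> P" "{q, p} \<in> T" "f q < f p"
        using descent less.prems by blast
      then have "{x \<in> P. f x < f q} \<subset> {x \<in> P. f x < f p}" by auto
      then have "card {x \<in> P. f x < f q} < card {x \<in> P. f x < f p}"
        using fin by (auto intro: psubset_card_mono)
      then have "(r, q) \<in> (adj T)\<^sup>*" using less.hyps q(1) by blast
      then show ?thesis using q(2) by (auto simp: adj_def intro: rtrancl_into_rtrancl)
    qed simp
  qed
qed

lemma graph_connected_subset_closed: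
  assumes "graph_connected P T" "x \<in> P" "x \<in> S" "\<And>z. z \<in> S \<Longrightarrow> neighbours T z \<subseteq> S"
  shows "P \<subseteq> S"
proof
  fix y assume "y \<in> P"
  then have "(x, y) \<in> (adj T)\<^sup>*" using assms(1,2) unfolding graph_connected_def by blast
  then show "y \<in> S"
    by (induction rule: rtrancl_induct) (use assms(3,4) adj_iff_neighbours in blast)+
qed

lemma graph_connected_neighbours_nonempty:
  assumes "graph_connected P T" "p \<in> P" "q \<in> P" "p \<noteq> q"
  shows "neighbours T p \<noteq> {}"
  using graph_connected_subset_closed[OF assms(1,2), of "{p}"] assms(3,4) by auto

section \<open>Graphs of maximum degree two\<close>

lemma card_le_2_eq_doubleton:
  "finite X \<Longrightarrow> card X \<le> 2 \<Longrightarrow> x \<in> X \<Longrightarrow> y \<in> X \<Longrightarrow> x \<noteq> y \<Longrightarrow> X = {x, y}"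
  using card_seteq[of X "{x, y}"] by auto

lemma card_1_eq_singleton: "card X = 1 \<Longrightarrow> x \<in> X \<Longrightarrow> X = {x}"
  by (metis card_1_singletonE singletonD)

lemma card_2_subset_triple: "card X = 2 \<Longrightarrow> a \<in> X \<Longrightarrow> X \<subseteq> {a, b, c} \<Longrightarrow> X = {a, b} \<or> X = {a, c}"
  by (auto simp: card_2_iff)

lemma path_between_leaves_closed:
  assumes ep: "edges_on P T" and fin: "finite P"
    and deg2: "\<And>v. v \<in> P \<Longrightarrow> card (neighbours T v) \<le> 2"
    and path: "rtrancl_path (\<lambda>x y. (x, y) \<in> adj T) a xs b" and dist: "distinct (a # xs)"
    and "xs \<noteq> []"
    and leaves: "card (neighbours T a) = 1" "card (neighbours T b) = 1"
    and z: "z \<in> set (a # xs)"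
  shows "neighbours T z \<subseteq> set (a # xs)"
    and "z \<noteq> a \<Longrightarrow> z \<noteq> b \<Longrightarrow> card (neighbours T z) = 2"
proof -
  define vs where "vs = a # xs"
  define n where "n = length xs"
  have "n \<noteq> 0" using \<open>xs \<noteq> []\<close> by (simp add: n_def)
  have ends: "vs ! 0 = a" "vs ! n = b"
    using rtrancl_path_last[OF path] \<open>xs \<noteq> []\<close> by (simp_all add: vs_def n_def last_conv_nth)
  have fwd: "vs ! Suc i \<in> neighbours T (vs ! i)" if "i < n" for i
    using rtrancl_path_nth[OF path] that by (simp add: vs_def n_def adj_iff_neighbours)
  have bwd: "vs ! i \<in> neighbours T (vs ! Suc i)" if "i < n" for i
    using fwd[OF that] by (rule neighbours_symD)
  have vs_nth_inj: "vs ! i = vs ! j \<longleftrightarrow> i = j" if "i \<le> n" "j \<le> n" for i j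
    using dist that by (simp add: vs_def n_def nth_eq_iff_index_eq)
  have inner: "neighbours T (vs ! i) = {vs ! (i - 1), vs ! Suc i}" if "0 < i" "i < n" for i
  proof (rule card_le_2_eq_doubleton[OF finite_neighbours[OF fin ep]])
    have "vs ! i \<in> P" using fwd[of "i - 1"] that neighbours_subset[OF ep] by force
    then show "card (neighbours T (vs ! i)) \<le> 2" by (rule deg2)
    show "vs ! (i - 1) \<in> neighbours T (vs ! i)" using bwd[of "i - 1"] that by simp
  qed (use fwd that vs_nth_inj in auto)
  have "length vs = Suc n" by (simp add: vs_def n_def)
  then have set_vs: "x \<in> set vs \<longleftrightarrow> (\<exists>i\<le>n. x = vs ! i)" for x
    by (auto simp: in_set_conv_nth less_Suc_eq_le)
  then have vs_in: "vs ! i \<in> set vs" if "i \<le> n" for i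
    using that by blast
  have set_eq: "set (a # xs) = set vs" by (simp add: vs_def)
  obtain i where i: "i \<le> n" "z = vs ! i" using z set_vs unfolding set_eq by blast
  consider "i = 0" | "i = n" | "0 < i" "i < n" using i(1) by linarith
  then have "neighbours T z \<subseteq> set vs"
  proof cases
    case 1
    have "neighbours T a = {vs ! 1}"
      using card_1_eq_singleton[OF leaves(1)] fwd[of 0] ends \<open>n \<noteq> 0\<close> by simp
    then show ?thesis using 1 i ends \<open>n \<noteq> 0\<close> vs_in[of 1] by auto
  next
    case 2
    have "neighbours T b = {vs ! (n - 1)}"
      using card_1_eq_singleton[OF leaves(2)] bwd[of "n - 1"] ends \<open>n \<noteq> 0\<close> by simp
    then show ?thesis using 2 i ends vs_in[of "n - 1"] by auto
  next
    case 3
    then show ?thesis using i inner vs_in by auto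
  qed
  then show "neighbours T z \<subseteq> set (a # xs)" by (simp only: set_eq)
  assume "z \<noteq> a" "z \<noteq> b"
  then have "0 < i" "i < n" using i ends by (auto intro: Nat.gr0I le_neq_implies_less)
  then show "card (neighbours T z) = 2"
    using inner[of i] i vs_nth_inj by auto
qed

lemma max_degree_2_at_most_two_leaves:
  assumes ep: "edges_on P T" and fin: "finite P" and con: "graph_connected P T"
    and deg2: "\<And>v. v \<in> P \<Longrightarrow> card (neighbours T v) \<le> 2"
    and abc: "a \<in> P" "b \<in> P" "c \<in> P" "distinct [a, b, c]"
    and leaves: "card (neighbours T a) = 1" "card (neighbours T b) = 1" "card (neighbours T c) = 1"
  shows False
proof -
  let ?r = "\<lambda>x y. (x, y) \<in> adj T"
  have "?r\<^sup>*\<^sup>* a b"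
    using con abc by (simp add: graph_connected_def rtranclp_rtrancl_eq)
  then obtain xs where path: "rtrancl_path ?r a xs b" and dist: "distinct (a # xs)"
    by (metis rtranclp_eq_rtrancl_path rtrancl_path_distinct)
  have "xs \<noteq> []" using path abc by (auto elim: rtrancl_path.cases)
  note closed = path_between_leaves_closed[OF ep fin deg2 path dist this leaves(1,2)]
  have "c \<in> set (a # xs)"
    using graph_connected_subset_closed[OF con abc(1), of "set (a # xs)"] closed(1) abc by auto
  then have "card (neighbours T c) = 2" using closed(2) abc by auto
  with leaves(3) show False by simp
qed

text \<open>
  If no prong vertex is a leaf, the degree bound confines the neighbours of the prongs, of u2
  and, when needed, of u1 to the fork, which is then cut off from c0.
\<close>

lemma fork_has_leaf:
  assumes ep: "edges_on P T" and fin: "finite P" and con: "graph_connected P T"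
    and deg2: "\<And>v. v \<in> P \<Longrightarrow> card (neighbours T v) \<le> 2"
    and inP: "{c0, u1, u2, v1, v2, w1, w2} \<subseteq> P"
    and dis: "distinct [c0, u1, u2, v1, v2, w1, w2]"
    and nv2: "neighbours T v2 \<subseteq> {v1, u2}" and nw2: "neighbours T w2 \<subseteq> {w1, u2}"
    and nv1: "neighbours T v1 \<subseteq> {u1, u2, v2, w1}" and nw1: "neighbours T w1 \<subseteq> {u1, u2, w2, v1}"
  shows "\<exists>x\<in>{v1, v2, w1, w2}. card (neighbours T x) = 1"
proof (rule ccontr)
  assume no_leaf: "\<not> ?thesis"
  have fn: "finite (neighbours T x)" for x
    using finite_neighbours[OF fin ep] .
  have two: "card (neighbours T x) = 2" if x: "x \<in> {v1, v2, w1, w2}" for x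
  proof -
    have "neighbours T x \<noteq> {}"
      using graph_connected_neighbours_nonempty[OF con, of x c0] x inP dis by auto
    then have "card (neighbours T x) \<noteq> 0" using fn[of x] by simp
    moreover have "card (neighbours T x) \<le> 2" using deg2[of x] x inP by auto
    moreover have "card (neighbours T x) \<noteq> 1" using no_leaf x by auto
    ultimately show ?thesis by linarith
  qed
  have Nv2: "neighbours T v2 = {v1, u2}"
    by (rule card_seteq[OF _ nv2]) (simp_all add: two card_insert_if)
  have Nw2: "neighbours T w2 = {w1, u2}"
    by (rule card_seteq[OF _ nw2]) (simp_all add: two card_insert_if)
  have Nu2: "neighbours T u2 = {v2, w2}"
  proof (rule card_le_2_eq_doubleton[OF fn deg2])
    show "v2 \<in> neighbours T u2" "w2 \<in> neighbours T u2"
      using Nv2 Nw2 by (auto intro: neighbours_symD)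
  qed (use inP dis in auto)
  have "v1 \<notin> neighbours T u2" "w1 \<notin> neighbours T u2" using Nu2 dis by auto
  then have "u2 \<notin> neighbours T v1" "u2 \<notin> neighbours T w1" by (auto dest: neighbours_symD)
  have "v2 \<in> neighbours T v1" "w2 \<in> neighbours T w1"
    using Nv2 Nw2 by (auto intro: neighbours_symD)
  have Nv1: "neighbours T v1 = {v2, w1} \<or> neighbours T v1 = {v2, u1}"
    using card_2_subset_triple[OF two \<open>v2 \<in> neighbours T v1\<close>] nv1 \<open>u2 \<notin> neighbours T v1\<close>
    by blast
  have Nw1: "neighbours T w1 = {w2, v1} \<or> neighbours T w1 = {w2, u1}"
    using card_2_subset_triple[OF two \<open>w2 \<in> neighbours T w1\<close>] nw1 \<open>u2 \<notin> neighbours T w1\<close>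
    by blast
  obtain S where S: "v1 \<in> S" "c0 \<notin> S" "\<And>z. z \<in> S \<Longrightarrow> neighbours T z \<subseteq> S"
  proof (cases "neighbours T v1 = {v2, w1}")
    case True
    then have "v1 \<in> neighbours T w1" by (auto intro: neighbours_symD)
    then have Nw1': "neighbours T w1 = {w2, v1}" using Nw1 dis by auto
    show thesis
      by (rule that[of "{u2, v1, v2, w1, w2}"]) (use True Nw1' Nv2 Nw2 Nu2 dis in auto)
  next
    case False
    then have Nv1': "neighbours T v1 = {v2, u1}" using Nv1 by blast
    then have "w1 \<notin> neighbours T v1" using dis by auto
    then have "v1 \<notin> neighbours T w1" by (auto dest: neighbours_symD)
    then have Nw1': "neighbours T w1 = {w2, u1}" using Nw1 by auto
    have Nu1: "neighbours T u1 = {v1, w1}"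
    proof (rule card_le_2_eq_doubleton[OF fn deg2])
      show "v1 \<in> neighbours T u1" "w1 \<in> neighbours T u1"
        using Nv1' Nw1' by (auto intro: neighbours_symD)
    qed (use inP dis in auto)
    show thesis
      by (rule that[of "{u1, u2, v1, v2, w1, w2}"]) (use Nu1 Nv1' Nw1' Nv2 Nw2 Nu2 dis in auto)
  qed
  then show False
    using graph_connected_subset_closed[OF con, of v1 S] inP by auto
qed

lemma connected_imp_spanning_subtree:
  assumes fin: "finite P" and ep: "edges_on P G" and con: "graph_connected P G"
  obtains T where "T \<subseteq> G" "spanning_tree P T"
proof -
  let ?C = "\<lambda>T. T \<subseteq> G \<and> graph_connected P T"
  obtain T where T: "?C T" and T_min: "\<And>T'. ?C T' \<Longrightarrow> card T \<le> card T'"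
    using ex_has_least_nat[of ?C G card] con by blast
  have "finite T" using T finite_edges[OF fin ep] finite_subset by blast
  have "\<not> graph_connected P (T - {e})" if "e \<in> T" for e
    using T_min[of "T - {e}"] card_Diff1_less[OF \<open>finite T\<close> that] T by auto
  moreover have "edges_on P T" using ep T unfolding edges_on_def by blast
  ultimately show thesis using that T unfolding spanning_tree_def by blast
qed

lemma finite_spanning_trees: "finite P \<Longrightarrow> finite {T. spanning_tree P T}"
  by (rule finite_subset[of _ "Pow (Pow P)"]) (auto simp: spanning_tree_def edges_on_def)

lemma finite_edge_lengths:
  assumes "finite P" "edges_on P T"
  shows "finite {dist p q | p q. {p, q} \<in> T}"
proof (rule finite_subset)
  show "{dist p q | p q. {p, q} \<in> T} \<subseteq> (\<lambda>(p, q). dist p q) ` (P \<times> P)"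
    using edges_onD[OF assms(2)] by force
qed (use assms(1) in simp)

lemma dist_le_max_edge:
  "finite P \<Longrightarrow> edges_on P T \<Longrightarrow> {p, q} \<in> T \<Longrightarrow> dist p q \<le> max_edge T"
  unfolding max_edge_def by (rule Max_ge) (auto simp: finite_edge_lengths)

lemma max_edge_le:
  assumes "finite P" "edges_on P T" "0 \<le> c" "\<And>p q. {p, q} \<in> T \<Longrightarrow> dist p q \<le> c"
  shows "max_edge T \<le> c"
  unfolding max_edge_def using assms by (intro Max.boundedI) (auto simp: finite_edge_lengths)

lemma separated_le_max_edge:
  assumes fin: "finite P" and st: "spanning_tree P T" and pq: "p \<in> P" "q \<in> P" "p \<noteq> q"
    and sep: "\<And>x y. x \<in> P \<Longrightarrow> y \<in> P \<Longrightarrow> x \<noteq> y \<Longrightarrow> \<delta> \<le> dist x y"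
  shows "\<delta> \<le> max_edge T"
proof -
  have ep: "edges_on P T" and con: "graph_connected P T"
    using st by (auto simp: spanning_tree_def)
  obtain y where y: "y \<in> neighbours T p"
    using graph_connected_neighbours_nonempty[OF con pq] by blast
  then have e: "{p, y} \<in> T" by (simp add: neighbours_def)
  have "\<delta> \<le> dist p y" using sep edges_onD[OF ep e] by blast
  also have "\<dots> \<le> max_edge T" by (rule dist_le_max_edge[OF fin ep e])
  finally show ?thesis .
qed

lemma bst_val_eqI:
  assumes "finite P" "spanning_tree P T" "max_edge T \<le> c"
    and "\<And>T. spanning_tree P T \<Longrightarrow> c \<le> max_edge T"
  shows "bst_val P = c"
  unfolding bst_val_def
proof (rule Min_eqI)
  show "finite {max_edge T | T. spanning_tree P T}"
    using finite_spanning_trees[OF assms(1)] by (rule finite_image_set)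
  show "c \<in> {max_edge T | T. spanning_tree P T}"
    using assms(2-4) by (force intro: antisym)
qed (use assms(4) in auto)

lemma bdeg_val_ge:
  assumes "finite P" "spanning_tree P T" "\<forall>v\<in>P. deg T v \<le> K"
    and "\<And>T. spanning_tree P T \<Longrightarrow> \<forall>v\<in>P. deg T v \<le> K \<Longrightarrow> c \<le> max_edge T"
  shows "c \<le> bdeg_val K P"
  unfolding bdeg_val_def
proof (rule Min.boundedI)
  have "finite {T. spanning_tree P T \<and> (\<forall>v\<in>P. deg T v \<le> K)}"
    using finite_spanning_trees[OF assms(1)] by (rule rev_finite_subset) auto
  then show "finite {max_edge T | T. spanning_tree P T \<and> (\<forall>v\<in>P. deg T v \<le> K)}"
    by (rule finite_image_set)
qed (use assms(2-4) in auto)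

lemma ratio_le_beta:
  "finite P \<Longrightarrow> 2 \<le> card P \<Longrightarrow> ereal (bdeg_val K P / bst_val P) \<le> beta K"
  unfolding beta_def by (rule Sup_upper) blast

definition short_edges :: "real \<Rightarrow> point set \<Rightarrow> point set set" where
  "short_edges r P = {{p, q} | p q. p \<in> P \<and> q \<in> P \<and> p \<noteq> q \<and> dist p q \<le> r}"

lemma spanning_tree_within_distance:
  assumes fin: "finite P" and "0 \<le> r" and con: "graph_connected P (short_edges r P)"
  obtains T where "spanning_tree P T" "max_edge T \<le> r"
proof -
  have ep: "edges_on P (short_edges r P)"
    unfolding edges_on_def short_edges_def by blast
  obtain T where T: "T \<subseteq> short_edges r P" "spanning_tree P T"
    using connected_imp_spanning_subtree[OF fin ep con] .
  have "dist p q \<le> r" if e: "{p, q} \<in> T" for p q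
  proof -
    obtain a b where "{p, q} = {a, b}" "dist a b \<le> r"
      using T(1) e unfolding short_edges_def by blast
    then show ?thesis by (auto simp: doubleton_eq_iff dist_commute)
  qed
  then have "max_edge T \<le> r"
    using T(2) max_edge_le[OF fin _ \<open>0 \<le> r\<close>] by (auto simp: spanning_tree_def)
  then show thesis using that T(2) by blast
qed

definition path_edges :: "point list \<Rightarrow> point set set" where
  "path_edges xs = {{xs ! i, xs ! Suc i} | i. Suc i < length xs}"

lemma edges_on_path_edges: "distinct xs \<Longrightarrow> edges_on (set xs) (path_edges xs)"
  unfolding edges_on_def path_edges_def by (fastforce simp: nth_eq_iff_index_eq)

lemma graph_connected_path_edges:
  assumes "xs \<noteq> []"
  shows "graph_connected (set xs) (path_edges xs)"
proof -
  have "(xs ! 0, xs ! i) \<in> (adj (path_edges xs))\<^sup>*" if "i < length xs" for i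
    using that
  proof (induction i)
    case (Suc i)
    then have "(xs ! i, xs ! Suc i) \<in> adj (path_edges xs)"
      by (auto simp: adj_def path_edges_def)
    with Suc show ?case by (auto intro: rtrancl_into_rtrancl)
  qed simp
  then show ?thesis
    using assms by (intro graph_connected_from_root[of "xs ! 0"]) (auto simp: in_set_conv_nth)
qed

lemma deg_path_edges_le_2:
  assumes "distinct xs"
  shows "deg (path_edges xs) v \<le> 2"
proof (cases "v \<in> set xs")
  case True
  then obtain j where j: "j < length xs" "v = xs ! j" by (metis in_set_conv_nth)
  have "{e \<in> path_edges xs. v \<in> e} \<subseteq> {{xs ! (j - 1), xs ! j}, {xs ! j, xs ! Suc j}}"
  proof
    fix e assume "e \<in> {e \<in> path_edges xs. v \<in> e}"
    then obtain i where i: "Suc i < length xs" "e = {xs ! i, xs ! Suc i}" "v \<in> e"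
      unfolding path_edges_def by blast
    then have "i = j \<or> Suc i = j" using assms j by (auto simp: nth_eq_iff_index_eq)
    then show "e \<in> {{xs ! (j - 1), xs ! j}, {xs ! j, xs ! Suc j}}" using i by auto
  qed
  then have "deg (path_edges xs) v \<le> card {{xs ! (j - 1), xs ! j}, {xs ! j, xs ! Suc j}}"
    unfolding deg_def by (rule card_mono[rotated]) simp
  also have "\<dots> \<le> 2" by (simp add: card_insert_if)
  finally show ?thesis .
next
  case False
  then have "{e \<in> path_edges xs. v \<in> e} = {}"
    by (auto simp: path_edges_def dest: nth_mem Suc_lessD)
  then show ?thesis unfolding deg_def by (metis card.empty zero_le)
qed

lemma degree_2_spanning_tree_exists:
  assumes "distinct xs" "xs \<noteq> []"
  obtains T where "spanning_tree (set xs) T" "\<forall>v\<in>set xs. deg T v \<le> 2"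
proof -
  obtain T where T: "T \<subseteq> path_edges xs" "spanning_tree (set xs) T"
    using connected_imp_spanning_subtree edges_on_path_edges graph_connected_path_edges assms
    by (metis finite_set)
  have "finite (path_edges xs)"
    using finite_edges[OF finite_set edges_on_path_edges[OF assms(1)]] .
  then have "deg T v \<le> 2" for v
    using deg_mono[OF _ T(1)] deg_path_edges_le_2[OF assms(1)] order_trans by blast
  then show thesis using that T(2) by blast
qed

section \<open>The triangular lattice\<close>

definition tri :: "int \<times> int \<Rightarrow> point" where
  "tri s = vector [of_int (fst s) + of_int (snd s) / 2, of_int (snd s) * sqrt 3 / 2]"

definition tri_sqdist :: "int \<times> int \<Rightarrow> int \<times> int \<Rightarrow> int" where
  "tri_sqdist s t = (fst s - fst t)\<^sup>2 + (fst s - fst t) * (snd s - snd t) + (snd s - snd t)\<^sup>2"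

lemma dist_tri: "dist (tri s) (tri t) = sqrt (tri_sqdist s t)"
proof -
  have "(tri s - tri t) \<bullet> (tri s - tri t) = tri_sqdist s t"
    by (simp add: inner_vec_def sum_2 tri_def tri_sqdist_def power2_eq_square algebra_simps)
  then show ?thesis by (simp add: dist_norm norm_eq_sqrt_inner)
qed

lemma tri_sqdist_ge_1:
  assumes "s \<noteq> t"
  shows "1 \<le> tri_sqdist s t"
proof -
  define x y where "x = fst s - fst t" and "y = snd s - snd t"
  have "x \<noteq> 0 \<or> y \<noteq> 0" using assms by (auto simp: x_def y_def prod_eq_iff)
  then have "0 < (2 * x + y)\<^sup>2 + 3 * y\<^sup>2" by (cases "y = 0") (auto intro!: add_nonneg_pos)
  also have "\<dots> = 4 * tri_sqdist s t"
    by (simp add: tri_sqdist_def x_def y_def power2_eq_square algebra_simps)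
  finally show ?thesis by linarith
qed

lemma dist_tri_ge_1: "s \<noteq> t \<Longrightarrow> 1 \<le> dist (tri s) (tri t)"
  using tri_sqdist_ge_1[of s t] by (simp add: dist_tri)

lemma tri_eq_iff: "tri s = tri t \<longleftrightarrow> s = t"
  using dist_tri_ge_1[of s t] by (cases "s = t") auto

lemma inj_tri: "inj tri"
  by (simp add: inj_def tri_eq_iff)

lemma neighbours_tri_subset:
  assumes ep: "edges_on (tri ` S) T" and short: "\<And>p q. {p, q} \<in> T \<Longrightarrow> dist p q < sqrt 7"
    and near: "\<forall>s\<in>S. tri_sqdist t s < 7 \<longrightarrow> s \<in> A"
  shows "neighbours T (tri t) \<subseteq> tri ` A - {tri t}"
proof
  fix q assume q: "q \<in> neighbours T (tri t)"
  then have e: "{tri t, q} \<in> T" by (simp add: neighbours_def)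
  then obtain s where s: "s \<in> S" "q = tri s" using edges_onD(3)[OF ep e] by blast
  then have "tri_sqdist t s < 7" using short[OF e] by (simp add: dist_tri)
  then show "q \<in> tri ` A - {tri t}"
    using near s q self_notin_neighbours[OF ep] by auto
qed

lemma tri_fork_has_leaf:
  assumes ep: "edges_on (tri ` S) T" and fin: "finite S" and con: "graph_connected (tri ` S) T"
    and deg2: "\<And>v. v \<in> tri ` S \<Longrightarrow> card (neighbours T v) \<le> 2"
    and short: "\<And>p q. {p, q} \<in> T \<Longrightarrow> dist p q < sqrt 7"
    and coords: "{c0, u1, u2, v1, v2, w1, w2} \<subseteq> S" "distinct [c0, u1, u2, v1, v2, w1, w2]"
    and near_v2: "\<forall>s\<in>S. tri_sqdist v2 s < 7 \<longrightarrow> s \<in> {v2, v1, u2}"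
    and near_w2: "\<forall>s\<in>S. tri_sqdist w2 s < 7 \<longrightarrow> s \<in> {w2, w1, u2}"
    and near_v1: "\<forall>s\<in>S. tri_sqdist v1 s < 7 \<longrightarrow> s \<in> {v1, u1, u2, v2, w1}"
    and near_w1: "\<forall>s\<in>S. tri_sqdist w1 s < 7 \<longrightarrow> s \<in> {w1, u1, u2, w2, v1}"
  shows "\<exists>x\<in>{v1, v2, w1, w2}. card (neighbours T (tri x)) = 1"
proof -
  have near: "neighbours T (tri t) \<subseteq> tri ` A - {tri t}"
    if "\<forall>s\<in>S. tri_sqdist t s < 7 \<longrightarrow> s \<in> A" for t A
    using ep short that by (rule neighbours_tri_subset)
  have "\<exists>x\<in>{tri v1, tri v2, tri w1, tri w2}. card (neighbours T x) = 1"
  proof (rule fork_has_leaf[OF ep finite_imageI[OF fin] con deg2])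
    show "{tri c0, tri u1, tri u2, tri v1, tri v2, tri w1, tri w2} \<subseteq> tri ` S"
      using coords by auto
    show "distinct [tri c0, tri u1, tri u2, tri v1, tri v2, tri w1, tri w2]"
      using coords by (simp add: tri_eq_iff)
    show "neighbours T (tri v2) \<subseteq> {tri v1, tri u2}"
      using near[OF near_v2] by auto
    show "neighbours T (tri w2) \<subseteq> {tri w1, tri u2}"
      using near[OF near_w2] by auto
    show "neighbours T (tri v1) \<subseteq> {tri u1, tri u2, tri v2, tri w1}"
      using near[OF near_v1] by auto
    show "neighbours T (tri w1) \<subseteq> {tri u1, tri u2, tri w2, tri v1}"
      using near[OF near_w1] by auto
  qed
  then show ?thesis by auto
qed

section \<open>The tripod configuration\<close>

text \<open>
  The origin and three forks, each the image of the previous one under the rotation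
  (a, b) \<mapsto> (- a - b, a) by 120 degrees.
\<close>

definition tripod_coords :: "(int \<times> int) list" where
  "tripod_coords =
     [(0, 0), (1, 0), (2, 0), (2, 1), (2, 2), (3, -1), (4, -2),
      (-1, 1), (-2, 2), (-3, 2), (-4, 2), (-2, 3), (-2, 4),
      (0, -1), (0, -2), (1, -3), (2, -4), (-1, -2), (-2, -2)]"

definition tripod :: "point set" where
  "tripod = tri ` set tripod_coords"

lemma distinct_tripod_coords: "distinct tripod_coords"
  by (simp add: tripod_coords_def)

lemma finite_tripod: "finite tripod"
  by (simp add: tripod_def)

lemma card_tripod: "card tripod = 19"
  unfolding tripod_def
  by (simp add: card_image inj_on_subset[OF inj_tri] distinct_card[OF distinct_tripod_coords])
    (simp add: tripod_coords_def)

lemma tripod_unit_connected: "graph_connected tripod (short_edges 1 tripod)"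
proof (rule graph_connected_by_descent[OF finite_tripod, of "tri (0, 0)" _ "dist (tri (0, 0))"])
  have descent: "\<forall>s\<in>set tripod_coords. s \<noteq> (0, 0) \<longrightarrow>
      (\<exists>t\<in>set tripod_coords. tri_sqdist t s = 1 \<and> tri_sqdist (0, 0) t < tri_sqdist (0, 0) s)"
    by (simp add: tripod_coords_def tri_sqdist_def)
  fix p assume p: "p \<in> tripod" "p \<noteq> tri (0, 0)"
  then obtain s where "s \<in> set tripod_coords" "s \<noteq> (0, 0)" and s: "p = tri s"
    unfolding tripod_def by blast
  then obtain t where t: "t \<in> set tripod_coords"
    and unit: "tri_sqdist t s = 1" and closer: "tri_sqdist (0, 0) t < tri_sqdist (0, 0) s"
    using descent by blast
  have "tri t \<in> tripod" using t by (simp add: tripod_def)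
  moreover have "tri t \<noteq> p" "dist (tri t) p = 1"
    using unit by (auto simp: s dist_tri tri_eq_iff tri_sqdist_def)
  then have "{tri t, p} \<in> short_edges 1 tripod"
    using \<open>tri t \<in> tripod\<close> p(1) unfolding short_edges_def by fastforce
  moreover have "dist (tri (0, 0)) (tri t) < dist (tri (0, 0)) p"
    using closer by (simp add: s dist_tri)
  ultimately show
    "\<exists>q\<in>tripod. {q, p} \<in> short_edges 1 tripod \<and> dist (tri (0, 0)) q < dist (tri (0, 0)) p"
    by blast
qed (simp add: tripod_def tripod_coords_def)

lemma bst_val_tripod: "bst_val tripod = 1"
proof -
  obtain T where "spanning_tree tripod T" "max_edge T \<le> 1"
    using spanning_tree_within_distance[OF finite_tripod _ tripod_unit_connected] by auto
  then show ?thesis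
  proof (rule bst_val_eqI[OF finite_tripod])
    have in_tripod: "tri (0, 0) \<in> tripod" "tri (1, 0) \<in> tripod"
      by (simp_all add: tripod_def tripod_coords_def)
    fix T assume "spanning_tree tripod T"
    then show "1 \<le> max_edge T"
      by (rule separated_le_max_edge[OF finite_tripod _ in_tripod])
        (auto simp: tripod_def tri_eq_iff dist_tri_ge_1)
  qed
qed

lemma tripod_three_leaves:
  assumes ep: "edges_on tripod T" and con: "graph_connected tripod T"
    and deg2: "\<And>v. v \<in> tripod \<Longrightarrow> card (neighbours T v) \<le> 2"
    and short: "\<And>p q. {p, q} \<in> T \<Longrightarrow> dist p q < sqrt 7"
  obtains p1 p2 p3 where "p1 \<in> tripod" "p2 \<in> tripod" "p3 \<in> tripod" "distinct [p1, p2, p3]"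
    "card (neighbours T p1) = 1" "card (neighbours T p2) = 1" "card (neighbours T p3) = 1"
proof -
  note fork = tri_fork_has_leaf[OF ep[unfolded tripod_def] finite_set con[unfolded tripod_def]
      deg2[unfolded tripod_def] short]
  have "\<exists>x\<in>{(2, 1), (2, 2), (3, -1), (4, -2)}. card (neighbours T (tri x)) = 1"
    by (rule fork[of "(0, 0)" "(1, 0)" "(2, 0)"]) (simp_all add: tripod_coords_def tri_sqdist_def)
  then obtain x1 where x1: "x1 \<in> {(2, 1), (2, 2), (3, -1), (4, -2)}"
      "card (neighbours T (tri x1)) = 1"
    by blast
  have "\<exists>x\<in>{(-3, 2), (-4, 2), (-2, 3), (-2, 4)}. card (neighbours T (tri x)) = 1"
    by (rule fork[of "(0, 0)" "(-1, 1)" "(-2, 2)"]) (simp_all add: tripod_coords_def tri_sqdist_def)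
  then obtain x2 where x2: "x2 \<in> {(-3, 2), (-4, 2), (-2, 3), (-2, 4)}"
      "card (neighbours T (tri x2)) = 1"
    by blast
  have "\<exists>x\<in>{(1, -3), (2, -4), (-1, -2), (-2, -2)}. card (neighbours T (tri x)) = 1"
    by (rule fork[of "(0, 0)" "(0, -1)" "(0, -2)"]) (simp_all add: tripod_coords_def tri_sqdist_def)
  then obtain x3 where x3: "x3 \<in> {(1, -3), (2, -4), (-1, -2), (-2, -2)}"
      "card (neighbours T (tri x3)) = 1"
    by blast
  have "x1 \<in> set tripod_coords" "x2 \<in> set tripod_coords" "x3 \<in> set tripod_coords"
    using x1(1) x2(1) x3(1) by (auto simp: tripod_coords_def)
  then have "tri x1 \<in> tripod" "tri x2 \<in> tripod" "tri x3 \<in> tripod"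
    by (simp_all add: tripod_def)
  moreover have "distinct [x1, x2, x3]"
    using x1(1) x2(1) x3(1) by (elim insertE emptyE) simp_all
  then have "distinct [tri x1, tri x2, tri x3]"
    by (simp add: tri_eq_iff)
  ultimately show thesis
    using that x1(2) x2(2) x3(2) by blast
qed

lemma tripod_degree_2_tree_has_long_edge:
  assumes st: "spanning_tree tripod T" and deg: "\<forall>v\<in>tripod. deg T v \<le> 2"
  shows "\<exists>p q. {p, q} \<in> T \<and> sqrt 7 \<le> dist p q"
proof (rule ccontr)
  assume "\<not> ?thesis"
  then have short: "\<And>p q. {p, q} \<in> T \<Longrightarrow> dist p q < sqrt 7" by (meson not_le)
  have ep: "edges_on tripod T" and con: "graph_connected tripod T"
    using st by (auto simp: spanning_tree_def)
  have deg2: "\<And>v. v \<in> tripod \<Longrightarrow> card (neighbours T v) \<le> 2"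
    using deg deg_eq_card_neighbours[OF ep] by simp
  obtain p1 p2 p3 where "p1 \<in> tripod" "p2 \<in> tripod" "p3 \<in> tripod" "distinct [p1, p2, p3]"
    "card (neighbours T p1) = 1" "card (neighbours T p2) = 1" "card (neighbours T p3) = 1"
    by (rule tripod_three_leaves[OF ep con deg2 short])
  then show False
    using max_degree_2_at_most_two_leaves[OF ep finite_tripod con deg2] by blast
qed
lemma bdeg_val_tripod: "sqrt 7 \<le> bdeg_val 2 tripod"
proof -
  have "distinct (map tri tripod_coords)"
    using distinct_tripod_coords inj_on_subset[OF inj_tri] by (simp add: distinct_map)
  moreover have "map tri tripod_coords \<noteq> []" by (simp add: tripod_coords_def)
  ultimately obtain T where "spanning_tree tripod T" "\<forall>v\<in>tripod. deg T v \<le> 2"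
    by (rule degree_2_spanning_tree_exists) (simp add: tripod_def)
  then show ?thesis
  proof (rule bdeg_val_ge[OF finite_tripod])
    fix T assume st: "spanning_tree tripod T" and "\<forall>v\<in>tripod. deg T v \<le> 2"
    then obtain p q where pq: "{p, q} \<in> T" "sqrt 7 \<le> dist p q"
      using tripod_degree_2_tree_has_long_edge by blast
    have "edges_on tripod T" using st by (simp add: spanning_tree_def)
    then show "sqrt 7 \<le> max_edge T"
      using dist_le_max_edge[OF finite_tripod _ pq(1)] pq(2) by linarith
  qed
qed

theorem mainTheorem3:
  shows "beta 2 \<ge> ereal (sqrt 7) \<and>
    (\<exists>P :: point set. finite P \<and> card P = 19 \<and> bst_val P = 1 \<and>
       (\<forall>T. spanning_tree P T \<and> (\<forall>v\<in>P. deg T v \<le> 2) \<longrightarrow>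
          (\<exists>p q. {p, q} \<in> T \<and> dist p q \<ge> sqrt 7)))"
proof -
  have "ereal (sqrt 7) \<le> ereal (bdeg_val 2 tripod / bst_val tripod)"
    using bdeg_val_tripod bst_val_tripod by simp
  also have "\<dots> \<le> beta 2"
    by (rule ratio_le_beta) (simp_all add: finite_tripod card_tripod)
  finally show ?thesis
    using finite_tripod card_tripod bst_val_tripod tripod_degree_2_tree_has_long_edge by blast
qed

end
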